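(* For every $\bar\alpha\in V$ and every positive integer $L$, $\bar M(\bar\alpha)\le\bar M(\bar\alpha^L)$.
   Context: For a non-zero algebraic number $\gamma$ with minimal polynomial $A\prod_{n=1}^N(x-\gamma_n)$ over $\mathbb Z$ (primitive, $A>0$), $M(\gamma)=A\prod_{n=1}^N\max\{1,|\gamma_n|\}$. $V=\overline{\mathbb Q}^\times/\mathrm{Tor}(\overline{\mathbb Q}^\times)$ with quotient map $\pi$. $\bar M(\beta)=\inf\{M(\zeta\beta):\zeta\text{ a root of unity}\}$, which is well-defined on $V$; for $\bar\beta\in V$, $\bar M(\bar\beta)=\inf\{M(\beta):\beta\in\pi^{-1}(\bar\beta)\}$. *)

theory Defs
  imports "Berlekamp_Zassenhaus.Mahler_Measure"
begin

definition min_int_poly :: "complex \<Rightarrow> int poly" where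
  "min_int_poly x = (THE p. p \<noteq> 0 \<and> poly (map_poly of_int p) x = 0 \<and> irreducible p
      \<and> content p = 1 \<and> lead_coeff p > 0)"

definition mahler_alg :: "complex \<Rightarrow> real" where
  "mahler_alg x = mahler_measure (min_int_poly x)"

definition root_of_unity :: "complex \<Rightarrow> bool" where
  "root_of_unity z \<longleftrightarrow> (\<exists>n::nat. n > 0 \<and> z ^ n = 1)"

text \<open>Mbar(beta) = inf over roots of unity zeta of M(zeta * beta); this is the
  value of Mbar on the torsion class of beta in V.\<close>
definition mahler_bar :: "complex \<Rightarrow> real" where
  "mahler_bar b = Inf {mahler_alg (z * b) | z. root_of_unity z}"

end

theory Submission
  imports Defs "Jordan_Normal_Form.Char_Poly" "Berlekamp_Zassenhaus.Factor_Bound"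
begin

(* Let \<gamma> = z \<alpha>^L with z a root of unity.  Pick an L-th root z' of z (again a
   root of unity) and put \<beta> = z' \<alpha>, so \<beta>^L = \<gamma>.  If p is the minimal polynomial of \<gamma>, then
   Q(X) = p(X^L) is a nonzero integer polynomial with root \<beta>, so the minimal polynomial q of
   \<beta> divides Q; hence M(\<beta>) = M(q) \<le> M(Q) = M(p) = M(\<gamma>), where M(p(X^L)) = M(p) because each
   linear factor X - a of p becomes X^L - a, whose roots are the L-th roots of a.  Taking
   infima over z gives the theorem. *)

section \<open>Minimal polynomials over the integers\<close>

definition is_min_int_poly :: "complex \<Rightarrow> int poly \<Rightarrow> bool" where
  "is_min_int_poly x p \<longleftrightarrow> p \<noteq> 0 \<and> poly (of_int_poly p) x = 0 \<and> irreducible p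
      \<and> content p = 1 \<and> lead_coeff p > 0"

lemma of_rat_of_int_poly:
  "map_poly of_rat (of_int_poly p :: rat poly) = (of_int_poly p :: 'a :: field_char_0 poly)"
  by (rule poly_eqI) (simp add: coeff_map_poly)

text \<open>A common complex root of two integer polynomials is a root of their gcd: over the
  rationals the gcd is a Bezout combination, and by Gauss's lemma it agrees with the integer
  gcd up to a nonzero scalar.\<close>

lemma gcd_int_poly_common_root:
  fixes p q :: "int poly" and x :: complex
  assumes px: "poly (of_int_poly p) x = 0" and qx: "poly (of_int_poly q) x = 0"
  shows "poly (of_int_poly (gcd p q)) x = 0"
proof (cases "gcd p q = 0")
  case False
  define c where "c = inverse (rat_of_int (lead_coeff (gcd p q)))"
  have c0: "c \<noteq> 0" using False unfolding c_def by simp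
  obtain a b where ab: "bezout_coefficients (of_int_poly p :: rat poly) (of_int_poly q) = (a, b)"
    by (cases "bezout_coefficients (of_int_poly p :: rat poly) (of_int_poly q)") auto
  have "a * of_int_poly p + b * of_int_poly q = smult c (of_int_poly (gcd p q))"
    using bezout_coefficients[OF ab] unfolding gcd_rat_to_gcd_int c_def .
  then have "map_poly (of_rat :: rat \<Rightarrow> complex) (a * of_int_poly p + b * of_int_poly q)
      = map_poly of_rat (smult c (of_int_poly (gcd p q)))" by simp
  then have "map_poly of_rat a * of_int_poly p + map_poly of_rat b * of_int_poly q
      = smult (of_rat c) (of_int_poly (gcd p q) :: complex poly)"
  proof -
    interpret map_poly_comm_ring_hom "of_rat :: rat \<Rightarrow> complex" ..
    show ?thesis using \<open>map_poly of_rat _ = _\<close>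
      by (simp add: hom_add hom_mult of_rat_hom.map_poly_hom_smult of_rat_of_int_poly)
  qed
  from arg_cong[OF this, of "\<lambda>f. poly f x"] px qx c0 show ?thesis by simp
qed simp

text \<open>An irreducible integer polynomial divides every integer polynomial sharing one of its
  roots: their gcd is a non-unit divisor of it.\<close>

lemma irreducible_int_poly_dvd_common_root:
  fixes p q :: "int poly" and x :: complex
  assumes irr: "irreducible p" and px: "poly (of_int_poly p) x = 0"
    and qx: "poly (of_int_poly q) x = 0"
  shows "p dvd q"
proof -
  define g where "g = gcd p q"
  have gx: "poly (of_int_poly g) x = 0"
    unfolding g_def using gcd_int_poly_common_root[OF px qx] .
  have "\<not> is_unit g"
  proof
    assume "is_unit g"
    then obtain c where "g = [:c:]" "is_unit c" by (auto simp: is_unit_poly_iff)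
    then show False using gx by auto
  qed
  moreover have "g dvd p" unfolding g_def by simp
  then obtain h where p_eq: "p = g * h" by (auto elim: dvdE)
  ultimately have "is_unit h" using irreducibleD[OF irr p_eq] by blast
  then have "p dvd g" using p_eq by (simp add: dvd_mult_unit_iff)
  then show ?thesis unfolding g_def using dvd_trans gcd_dvd2 by blast
qed

text \<open>Two minimal polynomials of x divide each other, and the normalisation (positive leading
  coefficient) fixes the remaining unit.\<close>

lemma is_min_int_poly_unique:
  assumes "is_min_int_poly x p" and "is_min_int_poly x q"
  shows "p = q"
proof -
  have "p dvd q" "q dvd p"
    using assms irreducible_int_poly_dvd_common_root unfolding is_min_int_poly_def by blast+
  then have "normalize p = normalize q" by (rule normalization_semidom_class.associatedI)
  moreover have "normalize f = f" if "lead_coeff f > 0" for f :: "int poly"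
    using that by (simp add: normalize_poly_def pCons_one)
  ultimately show ?thesis using assms unfolding is_min_int_poly_def by metis
qed

lemma prime_factor_with_root:
  fixes P :: "int poly" and x :: complex
  assumes P0: "P \<noteq> 0" and Px: "poly (of_int_poly P) x = 0"
  obtains q where "prime q" "poly (of_int_poly q) x = 0"
proof -
  have "P dvd prod_mset (prime_factorization P)"
    using prod_mset_prime_factorization_weak[OF P0] by (metis associatedD2)
  then obtain k where k: "prod_mset (prime_factorization P) = P * k" by (auto elim: dvdE)
  have "(\<Prod>q\<in>#prime_factorization P. poly (of_int_poly q) x)
      = poly (of_int_poly (prod_mset (prime_factorization P))) x"
    by (simp only: of_int_poly_hom.hom_prod_mset poly_prod_mset multiset.map_comp o_def)
  also have "\<dots> = 0" unfolding k using Px by (simp add: of_int_poly_hom.hom_mult)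
  finally obtain q where "q \<in># prime_factorization P" "poly (of_int_poly q) x = 0"
    by (auto simp: prod_mset_zero_iff)
  then show ?thesis using that in_prime_factors_imp_prime by blast
qed

text \<open>A prime (normalised) integer polynomial with a root is the minimal polynomial of it:
  a root excludes constants, so irreducibility forces primitivity, and normalisation means
  positive leading coefficient.\<close>

lemma prime_int_poly_is_min_int_poly:
  fixes q :: "int poly" and x :: complex
  assumes pq: "prime q" and qx: "poly (of_int_poly q) x = 0"
  shows "is_min_int_poly x q"
proof -
  have irr: "irreducible q" and q0: "q \<noteq> 0" and nq: "normalize q = q"
    using pq by (auto simp: prime_def intro: prime_elem_imp_irreducible)
  have "degree q \<noteq> 0"
  proof
    assume "degree q = 0"
    then obtain c where "q = [:c:]" by (metis degree_eq_zeroE)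
    then show False using q0 qx by auto
  qed
  then have "content q = 1" using irreducible_imp_primitive[OF irr] by simp
  moreover have "lead_coeff q > 0"
  proof -
    have "unit_factor q * q = 1 * q" using unit_factor_mult_normalize[of q] nq by simp
    then have "unit_factor q = 1" using q0 by (metis mult_cancel_right)
    then have "sgn (lead_coeff q) = 1" by (simp add: unit_factor_poly_def pCons_one)
    then show ?thesis by (simp add: sgn_1_pos)
  qed
  ultimately show ?thesis using q0 qx irr unfolding is_min_int_poly_def by blast
qed

text \<open>For algebraic x, the description in min_int_poly is satisfied by a unique
  polynomial, so it denotes the minimal polynomial.\<close>

lemma min_int_poly:
  assumes "algebraic x"
  shows "is_min_int_poly x (min_int_poly x)"
proof -
  obtain P :: "int poly" where "P \<noteq> 0" "poly (of_int_poly P) x = 0"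
    using algebraicE'[OF assms] by blast
  then obtain q where q: "is_min_int_poly x q"
    using prime_factor_with_root prime_int_poly_is_min_int_poly by metis
  have "min_int_poly x = q" unfolding min_int_poly_def is_min_int_poly_def[symmetric]
    using q is_min_int_poly_unique by blast
  then show ?thesis using q by simp
qed

section \<open>Closure properties of algebraic numbers\<close>

text \<open>The companion matrix of the monic polynomial X^n + \<Sum>j<n. c j X^j (last row -c,
  ones on the superdiagonal).\<close>

definition companion_mat :: "nat \<Rightarrow> (nat \<Rightarrow> 'a :: comm_ring_1) \<Rightarrow> 'a mat" where
  "companion_mat n c = mat n n (\<lambda>(i, j). if Suc i < n then (if j = Suc i then 1 else 0) else - c j)"

lemma companion_mat_carrier [simp]: "companion_mat n c \<in> carrier_mat n n"
  and companion_mat_dim [simp]: "dim_row (companion_mat n c) = n" "dim_col (companion_mat n c) = n"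
  unfolding companion_mat_def by simp_all

lemma map_companion_mat:
  "map_mat of_rat (companion_mat n c) = (companion_mat n (of_rat \<circ> c) :: 'a :: field_char_0 mat)"
  unfolding companion_mat_def by (rule eq_matI) (auto simp: of_rat_minus)

lemma companion_mat_eigenvector:
  fixes c :: "nat \<Rightarrow> 'a :: comm_ring_1"
  assumes n0: "n > 0" and root: "(\<Sum>j<n. c j * x ^ j) = - (x ^ n)"
  shows "eigenvector (companion_mat n c) (vec n (\<lambda>j. x ^ j)) x"
proof -
  define v where "v = vec n (\<lambda>j. x ^ j)"
  have "companion_mat n c *\<^sub>v v = x \<cdot>\<^sub>v v"
  proof (rule eq_vecI)
    fix i assume "i < dim_vec (x \<cdot>\<^sub>v v)"
    then have i: "i < n" unfolding v_def by simp
    have "(companion_mat n c *\<^sub>v v) $ i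
        = (\<Sum>j<n. (if Suc i < n then (if j = Suc i then 1 else 0) else - c j) * x ^ j)"
      using i unfolding v_def companion_mat_def
      by (simp add: scalar_prod_def atLeast0LessThan)
    also have "\<dots> = x ^ Suc i"
    proof (cases "Suc i < n")
      case True
      then have "(\<Sum>j<n. (if Suc i < n then (if j = Suc i then 1 else 0) else - c j) * x ^ j)
          = (\<Sum>j<n. if j = Suc i then x ^ j else 0)" by (intro sum.cong) auto
      then show ?thesis using True by simp
    next
      case False
      then have "n = Suc i" using i by simp
      then show ?thesis using root False by (simp add: sum_negf)
    qed
    finally show "(companion_mat n c *\<^sub>v v) $ i = (x \<cdot>\<^sub>v v) $ i" using i unfolding v_def by simp
  qed (simp add: v_def)
  moreover have "v \<noteq> 0\<^sub>v n" using n0 unfolding v_def by (auto dest: arg_cong[of _ _ "\<lambda>w. w $ 0"])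
  ultimately show ?thesis unfolding eigenvector_def v_def by simp
qed

text \<open>Every algebraic number is an eigenvalue of a rational matrix: divide an integer
  polynomial vanishing at it by its leading coefficient and take the companion matrix.\<close>

lemma algebraic_imp_eigenvalue_rat_mat:
  fixes x :: complex
  assumes "algebraic x"
  obtains n and A :: "rat mat" where "A \<in> carrier_mat n n" "eigenvalue (map_mat of_rat A) x"
proof -
  obtain P :: "int poly" where P0: "P \<noteq> 0" and Px: "poly (of_int_poly P) x = 0"
    using algebraicE'[OF assms] by blast
  define n where "n = degree P"
  define lc where "lc = lead_coeff P"
  define c where "c j = rat_of_int (coeff P j) / rat_of_int lc" for j
  have lc0: "lc \<noteq> 0" unfolding lc_def using P0 by simp
  have n0: "n > 0"
  proof (rule ccontr)
    assume "\<not> n > 0"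
    then obtain d where "P = [:d:]" unfolding n_def by (metis degree_eq_zeroE neq0_conv)
    then show False using P0 Px by auto
  qed
  have "0 = (\<Sum>j\<le>n. of_int (coeff P j) * x ^ j)"
    using Px unfolding poly_altdef n_def by (simp add: coeff_map_poly)
  also have "\<dots> = (\<Sum>j<n. of_int (coeff P j) * x ^ j) + of_int lc * x ^ n"
    unfolding lc_def n_def by (simp add: lessThan_Suc_atMost[symmetric])
  finally have "(\<Sum>j<n. of_int (coeff P j) * x ^ j) = - (of_int lc * x ^ n)"
    by (simp add: eq_neg_iff_add_eq_0 add.commute)
  then have "(\<Sum>j<n. of_int (coeff P j) * x ^ j) / of_int lc = - (x ^ n)"
    using lc0 by simp
  then have "(\<Sum>j<n. (of_rat \<circ> c) j * x ^ j) = - (x ^ n)"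
    unfolding c_def by (simp add: sum_divide_distrib of_rat_divide)
  from companion_mat_eigenvector[OF n0 this]
  have "eigenvalue (map_mat of_rat (companion_mat n c)) x"
    unfolding map_companion_mat eigenvalue_def by blast
  then show ?thesis using that companion_mat_carrier by blast
qed

text \<open>Conversely, eigenvalues of rational matrices are algebraic: they are roots of the
  (monic, rational) characteristic polynomial.\<close>

lemma eigenvalue_rat_mat_imp_algebraic:
  fixes A :: "rat mat" and x :: complex
  assumes A: "A \<in> carrier_mat n n" and ev: "eigenvalue (map_mat of_rat A) x"
  shows "algebraic x"
proof (rule algebraicI')
  have "eigenvalue (map_mat of_rat A) x \<longleftrightarrow> poly (char_poly (map_mat of_rat A)) x = 0"
    by (rule eigenvalue_root_char_poly) (use A in simp)
  with ev have "poly (char_poly (map_mat of_rat A)) x = 0" by blast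
  then show "poly (map_poly of_rat (char_poly A)) x = 0"
    by (simp add: of_rat_hom.char_poly_hom[OF A])
  have "coeff (char_poly A) n = 1" using degree_monic_char_poly[OF A] by simp
  then show "map_poly (of_rat :: rat \<Rightarrow> complex) (char_poly A) \<noteq> 0" by auto
qed (simp add: coeff_map_poly)

text \<open>Powers of algebraic numbers are algebraic: x^m is an eigenvalue of A^m when x is one of A.\<close>

lemma algebraic_power:
  fixes x :: complex
  assumes "algebraic x"
  shows "algebraic (x ^ m)"
proof -
  obtain n and A :: "rat mat" where A: "A \<in> carrier_mat n n"
    and "eigenvalue (map_mat of_rat A) x"
    using algebraic_imp_eigenvalue_rat_mat[OF assms] by blast
  then obtain v where ev: "eigenvector (map_mat of_rat A) v x" unfolding eigenvalue_def by blast
  have A': "map_mat of_rat A \<in> carrier_mat n n" using A by simp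
  have "map_mat of_rat A ^\<^sub>m m *\<^sub>v v = x ^ m \<cdot>\<^sub>v v" by (rule eigenvector_pow[OF A' ev])
  then have "eigenvalue (map_mat of_rat A ^\<^sub>m m) (x ^ m)"
    using ev A' unfolding eigenvalue_def eigenvector_def by auto
  then have "eigenvalue (map_mat of_rat (A ^\<^sub>m m)) (x ^ m)"
    by (simp add: of_rat_hom.mat_hom_pow[OF A])
  then show ?thesis using eigenvalue_rat_mat_imp_algebraic A pow_carrier_mat by blast
qed

text \<open>Multiplying by a root of unity z, z^k = 1, preserves algebraicity: (z a)^k = a^k.\<close>

lemma root_of_unity_mult_algebraic:
  assumes "algebraic a" and "root_of_unity z"
  shows "algebraic (z * a)"
proof -
  obtain k :: nat where k0: "k > 0" and zk: "z ^ k = 1"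
    using assms(2) unfolding root_of_unity_def by blast
  have "algebraic ((z * a) ^ k)"
    using algebraic_power[OF assms(1)] zk by (simp add: power_mult_distrib)
  then show ?thesis
    by (rule algebraic_root[where p = "monom 1 k"])
      (use k0 in \<open>simp_all add: poly_monom coeff_monom degree_monom_eq\<close>)
qed

section \<open>The Mahler measure under the substitution X \<mapsto> X^L\<close>

lemma mahler_measure_poly_smult_prod_list:
  "mahler_measure_poly (smult c (\<Prod>a\<leftarrow>as. g a)) = cmod c * (\<Prod>a\<leftarrow>as. mahler_measure_poly (g a))"
proof (induction as)
  case Nil
  then show ?case by (simp flip: pCons_one)
next
  case (Cons b as)
  have split: "smult c (\<Prod>a\<leftarrow>b # as. g a) = smult c (\<Prod>a\<leftarrow>as. g a) * g b"
    by (simp add: mult.commute)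
  show ?case unfolding split measure_eq_prod Cons.IH by simp
qed

text \<open>All roots of X^L - a have modulus |a|^(1/L), hence M(X^L - a) = max 1 |a|.\<close>

lemma mahler_measure_poly_binomial:
  fixes a :: complex
  assumes L: "L > 0"
  shows "mahler_measure_poly (monom 1 L + [:- a:]) = max 1 (cmod a)"
proof -
  define h where "h = monom (1::complex) L + [:- a:]"
  define rs where "rs = complex_roots_complex h"
  have deg: "degree h = L" unfolding h_def using L by (simp add: degree_add_eq_left degree_monom_eq)
  have "coeff [:- a:] L = 0" using L by (cases L) auto
  then have lc: "lead_coeff h = 1" unfolding deg unfolding h_def by (simp add: coeff_monom)
  have len: "length rs = L" unfolding rs_def using deg by simp
  have root_norm: "cmod b = root L (cmod a)" if "b \<in> set rs" for b
  proof -
    have "poly (\<Prod>a\<leftarrow>rs. [:- a, 1:]) b = 0"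
      using that by (induct rs) (auto simp: poly_prod_list)
    then have "poly h b = 0" using complex_roots(1)[of h] lc unfolding rs_def by simp
    then have "cmod b ^ L = cmod a" unfolding h_def by (simp add: poly_monom flip: norm_power)
    then show ?thesis using L by (intro real_root_pos_unique[symmetric]) auto
  qed
  have "mahler_measure_poly h = (\<Prod>b\<leftarrow>rs. max 1 (root L (cmod a)))"
    unfolding mahler_measure_poly_def lc rs_def[symmetric] using root_norm
    by (simp cong: map_cong)
  also have "\<dots> = max 1 (root L (cmod a)) ^ L"
    by (simp add: map_replicate_const len)
  also have "\<dots> = max 1 (cmod a)"
    using L by (cases "cmod a \<le> 1") (simp_all add: max_def real_root_pow_pos2)
  finally show ?thesis unfolding h_def .
qed

text \<open>Substituting X^L multiplies each linear factor X - a into X^L - a, which has the same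
  Mahler measure.\<close>

lemma mahler_measure_poly_pcompose_monom:
  fixes f :: "complex poly"
  assumes L: "L > 0"
  shows "mahler_measure_poly (f \<circ>\<^sub>p monom 1 L) = mahler_measure_poly f"
proof -
  define rs where "rs = complex_roots_complex f"
  have f: "f = smult (lead_coeff f) (\<Prod>a\<leftarrow>rs. [:- a, 1:])"
    using complex_roots(1)[of f] unfolding rs_def by simp
  have "f \<circ>\<^sub>p monom 1 L = smult (lead_coeff f) (\<Prod>a\<leftarrow>rs. [:- a, 1:] \<circ>\<^sub>p monom 1 L)"
    by (subst f) (simp add: pcompose_smult pcompose_hom.hom_prod_list o_def)
  also have "(\<lambda>a. [:- a, 1:] \<circ>\<^sub>p monom 1 L) = (\<lambda>a::complex. monom 1 L + [:- a:])"
    by (rule ext) (simp add: pcompose_pCons add.commute)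
  finally have "mahler_measure_poly (f \<circ>\<^sub>p monom 1 L) = cmod (lead_coeff f) * (\<Prod>a\<leftarrow>rs. max 1 (cmod a))"
    by (simp add: mahler_measure_poly_smult_prod_list mahler_measure_poly_binomial[OF L])
  also have "\<dots> = mahler_measure_poly f" unfolding mahler_measure_poly_def rs_def ..
  finally show ?thesis .
qed

lemma mahler_measure_pcompose_monom:
  fixes p :: "int poly"
  assumes "L > 0"
  shows "mahler_measure (p \<circ>\<^sub>p monom 1 L) = mahler_measure p"
proof -
  have "of_int_poly (p \<circ>\<^sub>p monom 1 L) = (of_int_poly p :: complex poly) \<circ>\<^sub>p monom 1 L"
    by (simp add: of_int_hom.map_poly_pcompose map_poly_monom)
  then show ?thesis unfolding mahler_measure_def using mahler_measure_poly_pcompose_monom[OF assms]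
    by simp
qed

text \<open>If \<beta>^L is algebraic, then so is \<beta>, and M(\<beta>) \<le> M(\<beta>^L): the minimal
  polynomial of \<beta> divides p(X^L), where p is the minimal polynomial of \<beta>^L.\<close>

lemma mahler_alg_le_power:
  fixes \<beta> :: complex
  assumes alg: "algebraic (\<beta> ^ L)" and L: "L > 0"
  shows "mahler_alg \<beta> \<le> mahler_alg (\<beta> ^ L)"
proof -
  define p where "p = min_int_poly (\<beta> ^ L)"
  define Q where "Q = p \<circ>\<^sub>p monom 1 L"
  have p: "is_min_int_poly (\<beta> ^ L) p" unfolding p_def by (rule min_int_poly[OF alg])
  have Q0: "Q \<noteq> 0" unfolding Q_def using p L
    by (simp add: is_min_int_poly_def pcompose_eq_0_iff degree_monom_eq)
  have Q_root: "poly (of_int_poly Q) \<beta> = 0" using p unfolding Q_def is_min_int_poly_def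
    by (simp add: of_int_hom.map_poly_pcompose map_poly_monom poly_pcompose poly_monom)
  have "algebraic \<beta>" using Q0 Q_root by (intro algebraicI[of "of_int_poly Q"]) auto
  then have "is_min_int_poly \<beta> (min_int_poly \<beta>)" by (rule min_int_poly)
  then have "min_int_poly \<beta> dvd Q"
    using Q_root irreducible_int_poly_dvd_common_root unfolding is_min_int_poly_def by blast
  then have "mahler_measure (min_int_poly \<beta>) \<le> mahler_measure Q" by (rule mahler_measure_dvd[OF Q0])
  also have "\<dots> = mahler_measure p" unfolding Q_def by (rule mahler_measure_pcompose_monom[OF L])
  finally show ?thesis unfolding mahler_alg_def p_def .
qed

text \<open>Every element z \<alpha>^L of the torsion class of \<alpha>^L is the L-th power of an element z' \<alpha>
  of the torsion class of \<alpha> (z' an L-th root of z), whose Mahler measure is no larger.\<close>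

lemma mahler_alg_torsion_class_power:
  assumes alg: "algebraic \<alpha>" and L: "L > 0" and z: "root_of_unity z"
  obtains z' where "root_of_unity z'" "mahler_alg (z' * \<alpha>) \<le> mahler_alg (z * \<alpha> ^ L)"
proof -
  obtain z' where z': "z' ^ L = z" using nth_root_exists[OF L] by blast
  obtain k :: nat where "k > 0" "z ^ k = 1" using z unfolding root_of_unity_def by blast
  then have "root_of_unity z'"
    unfolding root_of_unity_def using L z' by (intro exI[of _ "L * k"]) (simp add: power_mult)
  moreover have "(z' * \<alpha>) ^ L = z * \<alpha> ^ L" using z' by (simp add: power_mult_distrib)
  moreover have "algebraic (z * \<alpha> ^ L)"
    using root_of_unity_mult_algebraic[OF algebraic_power[OF alg] z] .
  ultimately show ?thesis using that mahler_alg_le_power[of "z' * \<alpha>" L] L by metis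
qed

theorem mainTheorem5:
  fixes \<alpha> :: complex and L :: nat
  assumes "algebraic \<alpha>" and "\<alpha> \<noteq> 0" and "L > 0"
  shows "mahler_bar \<alpha> \<le> mahler_bar (\<alpha> ^ L)"
  unfolding mahler_bar_def
proof (rule cInf_mono)
  have "root_of_unity 1" unfolding root_of_unity_def by auto
  then show "{mahler_alg (z * \<alpha> ^ L) | z. root_of_unity z} \<noteq> {}" by blast
  show "bdd_below {mahler_alg (z * \<alpha>) | z. root_of_unity z}"
    by (rule bdd_belowI[of _ 0]) (auto simp: mahler_alg_def mahler_measure_ge_0)
  fix b assume "b \<in> {mahler_alg (z * \<alpha> ^ L) | z. root_of_unity z}"
  then obtain z where "root_of_unity z" and "b = mahler_alg (z * \<alpha> ^ L)" by blast
  then obtain z' where "root_of_unity z'" "mahler_alg (z' * \<alpha>) \<le> b"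
    using mahler_alg_torsion_class_power[OF assms(1,3)] by blast
  then show "\<exists>a \<in> {mahler_alg (z * \<alpha>) | z. root_of_unity z}. a \<le> b" by blast
qed

end
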